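(* Let $\Gamma$ be a non-amenable group. Then there exists $p>1$ such that $T_1(\Gamma)\nsubseteq \ell^p(\Gamma)$.
   Context: For a group $\Gamma$, the space $T_1(\Gamma)$ of Littlewood functions is the space of all functions $f\colon\Gamma\to\mathbf{C}$ for which there exist $f_1,f_2\colon\Gamma\times\Gamma\to\mathbf{C}$ with $f(x^{-1}y)=f_1(x,y)+f_2(x,y)$ for all $x,y\in\Gamma$, such that $\sup_x\sum_y|f_1(x,y)|<\infty$ and $\sup_y\sum_x|f_2(x,y)|<\infty$. *)

theory Defs
  imports "HOL-Analysis.Analysis"
begin

text \<open>A (discrete) group is modelled as a type of class group_add (not necessarily
commutative); the product x y is written x + y and x^{-1} is written - x.\<close>

text \<open>Left-invariant mean on all subsets (finitely additive left-invariant probability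
measure); a group is amenable iff such a mean exists (von Neumann).\<close>
definition left_invariant_mean :: "('a::group_add set \<Rightarrow> real) \<Rightarrow> bool" where
  "left_invariant_mean \<mu> \<longleftrightarrow>
     \<mu> UNIV = 1 \<and> (\<forall>A. 0 \<le> \<mu> A) \<and>
     (\<forall>A B. A \<inter> B = {} \<longrightarrow> \<mu> (A \<union> B) = \<mu> A + \<mu> B) \<and>
     (\<forall>g A. \<mu> ((\<lambda>a. g + a) ` A) = \<mu> A)"

definition amenable :: "'a::group_add itself \<Rightarrow> bool" where
  "amenable _ \<longleftrightarrow> (\<exists>\<mu>::'a set \<Rightarrow> real. left_invariant_mean \<mu>)"

definition littlewood :: "('a::group_add \<Rightarrow> complex) set" where
  "littlewood = {f. \<exists>f1 f2 :: 'a \<Rightarrow> 'a \<Rightarrow> complex.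
      (\<forall>x y. f (- x + y) = f1 x y + f2 x y) \<and>
      (\<exists>C. \<forall>x. (\<lambda>y. norm (f1 x y)) summable_on UNIV \<and> (\<Sum>\<^sub>\<infinity>y. norm (f1 x y)) \<le> C) \<and>
      (\<exists>C. \<forall>y. (\<lambda>x. norm (f2 x y)) summable_on UNIV \<and> (\<Sum>\<^sub>\<infinity>x. norm (f2 x y)) \<le> C)}"

definition lp_space :: "real \<Rightarrow> ('a \<Rightarrow> complex) set" where
  "lp_space p = {f. (\<lambda>x. norm (f x) powr p) summable_on UNIV}"

end

theory Submission
  imports Defs
begin

(*
  A non-amenable group fails Folner's condition (a cluster point of the uniform distributions on
  Folner sets would be an invariant mean), so there are a finite symmetric set S and e > 0 such
  that every finite set B loses more than e |B| points under some right translation by s \<in> S.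
  For the lazy random walk driven by S this isoperimetric inequality yields Kesten's spectral
  gap: the Markov operator contracts l^2 by a factor q < 1, hence the n-step probabilities
  satisfy p_n(g) \<le> \<theta>^n with \<theta> = sqrt q.

  For 1 < r < 1/\<theta> the Green function f = \<Sum>_n r^n p_n is then a Littlewood function by
  Schur's test: the Green function w of a larger rate \<rho> < 1/\<theta> satisfies P w \<le> w / \<rho>, and
  f(x^{-1} y) splits into a row-summable and a column-summable part according to whether
  w(x) \<le> w(y). On the other hand p_n is a probability on at most |S|^n points, so by Jensen's
  inequality \<Sum>_g f(g)^p \<ge> (r^p |S|^{1-p})^n, which is unbounded once p > 1 is close to 1.
*)

lemma sum_translate:
  fixes f :: "'a::group_add \<Rightarrow> 'b::comm_monoid_add"
  assumes D: "finite D" and "\<And>x. f (x + s) \<noteq> 0 \<Longrightarrow> x \<in> D" and "\<And>x. f x \<noteq> 0 \<Longrightarrow> x \<in> D"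
  shows "(\<Sum>x\<in>D. f (x + s)) = (\<Sum>x\<in>D. f x)"
proof -
  have "(\<Sum>x\<in>D. f (x + s)) = (\<Sum>x\<in>{x. f (x + s) \<noteq> 0}. f (x + s))"
    using assms by (intro sum.mono_neutral_right) auto
  also have "\<dots> = (\<Sum>y\<in>(\<lambda>x. x + s) ` {x. f (x + s) \<noteq> 0}. f y)"
    by (subst sum.reindex) (auto intro: inj_onI)
  also have "(\<lambda>x. x + s) ` {x. f (x + s) \<noteq> 0} = {y. f y \<noteq> 0}"
    by (auto intro!: image_eqI[where x="_ + - s"] simp: add.assoc)
  also have "(\<Sum>y\<in>{y. f y \<noteq> 0}. f y) = (\<Sum>x\<in>D. f x)"
    using assms by (intro sum.mono_neutral_left) auto
  finally show ?thesis .
qed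

lemma weighted_sq_deviation:
  fixes w a :: "'b \<Rightarrow> real"
  assumes "sum w S = 1"
  shows "(\<Sum>i\<in>S. w i * (a i - t)\<^sup>2)
           = (\<Sum>i\<in>S. w i * (a i)\<^sup>2) - 2 * t * (\<Sum>i\<in>S. w i * a i) + t\<^sup>2"
proof -
  have "(\<Sum>i\<in>S. w i * (a i - t)\<^sup>2)
      = (\<Sum>i\<in>S. w i * (a i)\<^sup>2) - 2 * t * (\<Sum>i\<in>S. w i * a i) + t\<^sup>2 * sum w S"
    by (simp add: power2_diff algebra_simps sum.distrib sum_subtractf sum_distrib_left
        sum_distrib_right)
  with assms show ?thesis by simp
qed

lemma lazy_mean_sq_le:
  fixes w a :: "'b \<Rightarrow> real"
  assumes "finite S" "c \<in> S" "sum w S = 1" "\<And>i. 0 \<le> w i" "1/2 \<le> w c"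
  shows "(\<Sum>i\<in>S. w i * a i)\<^sup>2
           \<le> (\<Sum>i\<in>S. w i * (a i)\<^sup>2) - 1/4 * (\<Sum>i\<in>S. w i * (a i - a c)\<^sup>2)"
proof -
  define M where "M = (\<Sum>i\<in>S. w i * a i)"
  define Q where "Q = (\<Sum>i\<in>S. w i * (a i)\<^sup>2)"
  have var: "(\<Sum>i\<in>S. w i * (a i - M)\<^sup>2) = Q - M\<^sup>2"
    using weighted_sq_deviation[OF assms(3)] by (simp add: M_def Q_def power2_eq_square)
  have dev: "(\<Sum>i\<in>S. w i * (a i - a c)\<^sup>2) = Q - M\<^sup>2 + (a c - M)\<^sup>2"
    using weighted_sq_deviation[OF assms(3)] by (simp add: M_def Q_def power2_diff)
  have "1/2 * (a c - M)\<^sup>2 \<le> w c * (a c - M)\<^sup>2"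
    using assms(5) by (intro mult_right_mono) auto
  also have "\<dots> \<le> (\<Sum>i\<in>S. w i * (a i - M)\<^sup>2)"
    using assms by (intro member_le_sum[where f = "\<lambda>i. w i * (a i - M)\<^sup>2"]) auto
  finally show ?thesis
    using var dev zero_le_power2[of "a c - M"] unfolding M_def[symmetric] Q_def[symmetric]
    by linarith
qed

lemma sum_max_diff_remove_level:
  fixes \<psi> :: "'a::group_add \<Rightarrow> real"
  assumes D: "finite D" "Z \<subseteq> D" and nonneg: "\<And>z. 0 \<le> \<psi> z"
    and above: "\<And>z. z \<in> Z \<Longrightarrow> c \<le> \<psi> z" and outside: "\<And>z. z \<notin> Z \<Longrightarrow> \<psi> z = 0"
  shows "(\<Sum>x\<in>D. max 0 (\<psi> x - \<psi> (x + s)))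
    = (\<Sum>x\<in>D. max 0 ((\<psi> x - c * of_bool (x \<in> Z)) - (\<psi> (x + s) - c * of_bool (x + s \<in> Z))))
      + c * real (card {x\<in>Z. x + s \<notin> Z})"
proof -
  have pointwise: "max 0 (\<psi> x - \<psi> y)
      = max 0 ((\<psi> x - c * of_bool (x \<in> Z)) - (\<psi> y - c * of_bool (y \<in> Z)))
        + c * of_bool (x \<in> Z \<and> y \<notin> Z)" for x y
    using nonneg[of x] nonneg[of y] above[of x] above[of y] outside[of x] outside[of y]
    by (cases "x \<in> Z"; cases "y \<in> Z") (auto simp: max_def)
  have "D \<inter> {x. x \<in> Z \<and> x + s \<notin> Z} = {x\<in>Z. x + s \<notin> Z}" using D(2) by blast
  then show ?thesis using D(1) by (simp add: pointwise sum.distrib flip: sum_distrib_left)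
qed

lemma card_powr_le_sum_powr:
  fixes u :: "'b \<Rightarrow> real"
  assumes fin: "finite Z" and ne: "Z \<noteq> {}" and pos: "\<And>i. i \<in> Z \<Longrightarrow> 0 < u i"
    and sum_u: "sum u Z = 1" and p: "1 \<le> p"
  shows "real (card Z) powr (1 - p) \<le> (\<Sum>i\<in>Z. u i powr p)"
proof -
  define N where "N = real (card Z)"
  have N_pos: "N > 0" unfolding N_def using fin ne by (simp add: card_gt_0_iff)
  have "(\<lambda>x. x powr p) (\<Sum>i\<in>Z. (1 / N) *\<^sub>R u i) \<le> (\<Sum>i\<in>Z. (1 / N) * (\<lambda>x. x powr p) (u i))"
    using fin ne powr_convex[OF p] pos N_pos by (intro convex_on_sum) (auto simp: N_def)
  moreover have "(\<Sum>i\<in>Z. (1 / N) *\<^sub>R u i) = 1 / N"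
    using sum_u by (simp flip: sum_divide_distrib)
  ultimately have "(1 / N) powr p \<le> (1 / N) * (\<Sum>i\<in>Z. u i powr p)"
    by (simp add: sum_distrib_left)
  then have "N * (1 / N) powr p \<le> (\<Sum>i\<in>Z. u i powr p)"
    using N_pos by (simp add: field_simps)
  moreover have "N powr (1 - p) = N * (1 / N) powr p"
    using N_pos by (simp add: powr_diff powr_divide)
  ultimately show ?thesis unfolding N_def by simp
qed

lemma exponent_beyond_one:
  fixes r c :: real
  assumes "1 < r" "1 \<le> c"
  shows "\<exists>p>1. 1 < r powr p * c powr (1 - p)"
proof -
  define \<delta> where "\<delta> = ln r / (ln c + 1)"
  have "0 < ln r" "0 \<le> ln c" using assms by auto
  then have "0 < \<delta>" unfolding \<delta>_def by simp
  have "\<delta> * ln c < ln r"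
    unfolding \<delta>_def using \<open>0 < ln r\<close> \<open>0 \<le> ln c\<close> by (simp add: field_simps)
  moreover have "0 < \<delta> * ln r" using \<open>0 < \<delta>\<close> \<open>0 < ln r\<close> by simp
  ultimately have "0 < (1 + \<delta>) * ln r + (1 - (1 + \<delta>)) * ln c"
    by (simp add: algebra_simps)
  then have "1 < exp ((1 + \<delta>) * ln r + (1 - (1 + \<delta>)) * ln c)" by simp
  also have "\<dots> = r powr (1 + \<delta>) * c powr (1 - (1 + \<delta>))"
    using assms by (simp add: powr_def flip: exp_add)
  finally show ?thesis using \<open>0 < \<delta>\<close> by (intro exI[of _ "1 + \<delta>"]) auto
qed

section \<open>Folner sets and invariant means\<close>

definition folner_condition :: "'a::group_add itself \<Rightarrow> bool" where
  "folner_condition _ \<longleftrightarrow> (\<forall>G::'a set. finite G \<longrightarrow> (\<forall>e>0. \<exists>A. finite A \<and> A \<noteq> {} \<and>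
     (\<forall>h\<in>G. real (card ((\<lambda>a. h + a) ` A - A)) \<le> e * real (card A))))"

definition prob_contents :: "('a set \<Rightarrow> real) set" where
  "prob_contents = {\<mu>. (\<forall>B. \<mu> B \<in> {0..1}) \<and> \<mu> UNIV = 1 \<and>
     (\<forall>A B. A \<inter> B = {} \<longrightarrow> \<mu> (A \<union> B) = \<mu> A + \<mu> B)}"

lemma compact_prob_contents: "compact (prob_contents :: ('a set \<Rightarrow> real) set)"
proof -
  have "compactin (product_topology (\<lambda>_. euclidean) UNIV) (PiE UNIV (\<lambda>_::'a set. {0..1::real}))"
    by (simp add: compactin_PiE)
  moreover have "PiE UNIV (\<lambda>_::'a set. {0..1::real}) = {\<mu>. \<forall>B. \<mu> B \<in> {0..1}}"
    by (auto simp: PiE_def Pi_def)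
  ultimately have cube: "compact {\<mu>::'a set \<Rightarrow> real. \<forall>B. \<mu> B \<in> {0..1}}"
    by (simp add: euclidean_product_topology)
  have additive: "closed {\<mu>::'a set \<Rightarrow> real. \<mu> UNIV = 1 \<and>
      (\<forall>A B. A \<inter> B = {} \<longrightarrow> \<mu> (A \<union> B) = \<mu> A + \<mu> B)}"
    unfolding Collect_conj_eq Collect_all_eq Collect_imp_eq
    by (intro closed_Int closed_INT closed_Collect_eq ballI closed_Un continuous_intros)
      (auto simp: Compl_eq)
  have "prob_contents = {\<mu>::'a set \<Rightarrow> real. \<forall>B. \<mu> B \<in> {0..1}} \<inter> {\<mu>. \<mu> UNIV = 1 \<and>
      (\<forall>A B. A \<inter> B = {} \<longrightarrow> \<mu> (A \<union> B) = \<mu> A + \<mu> B)}"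
    unfolding prob_contents_def by blast
  then show ?thesis using compact_Int_closed[OF cube additive] by simp
qed

lemma card_Int_diff_le:
  assumes "finite A" "finite A'" "card A' = card A"
  shows "\<bar>real (card (B \<inter> A')) - real (card (B \<inter> A))\<bar> \<le> real (card (A' - A))"
proof -
  have "card (B \<inter> A') \<le> card (B \<inter> A \<union> (A' - A))"
    using assms by (intro card_mono) auto
  also have "\<dots> \<le> card (B \<inter> A) + card (A' - A)" by (rule card_Un_le)
  finally have 1: "card (B \<inter> A') \<le> card (B \<inter> A) + card (A' - A)" .
  have "card (B \<inter> A) \<le> card (B \<inter> A' \<union> (A - A'))"
    using assms by (intro card_mono) auto
  also have "\<dots> \<le> card (B \<inter> A') + card (A - A')" by (rule card_Un_le)
  finally have 2: "card (B \<inter> A) \<le> card (B \<inter> A') + card (A - A')" .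
  have "card (A - A') = card (A' - A)"
    using assms by (simp add: card_Diff_subset_Int Int_commute)
  with 1 2 show ?thesis by linarith
qed

definition uniform_content :: "'a set \<Rightarrow> 'a set \<Rightarrow> real" where
  "uniform_content A B = real (card (B \<inter> A)) / real (card A)"

lemma uniform_content_in_prob_contents:
  assumes "finite A" "A \<noteq> {}"
  shows "uniform_content A \<in> prob_contents"
proof -
  have "card (B \<inter> A) \<le> card A" for B using assms(1) by (intro card_mono) auto
  moreover have "card ((B \<union> C) \<inter> A) = card (B \<inter> A) + card (C \<inter> A)" if "B \<inter> C = {}" for B C
    using that assms(1) by (subst card_Un_disjoint[symmetric]) (auto simp: Int_Un_distrib2)
  ultimately show ?thesis
    using assms by (auto simp: prob_contents_def uniform_content_def add_divide_distrib
        divide_le_eq card_gt_0_iff)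
qed

lemma uniform_content_translate:
  fixes A :: "'a::group_add set"
  assumes "finite A"
  shows "\<bar>uniform_content A ((\<lambda>a. g + a) ` B) - uniform_content A B\<bar>
           \<le> real (card ((\<lambda>a. - g + a) ` A - A)) / real (card A)"
proof -
  have "(\<lambda>a. - g + a) ` ((\<lambda>a. g + a) ` B \<inter> A) = B \<inter> (\<lambda>a. - g + a) ` A"
    by (force simp: add.assoc[symmetric])
  then have "card ((\<lambda>a. g + a) ` B \<inter> A) = card (B \<inter> (\<lambda>a. - g + a) ` A)"
    by (metis card_image add_left_imp_eq inj_onI)
  moreover have "card ((\<lambda>a. - g + a) ` A) = card A"
    by (simp add: card_image inj_on_def)
  ultimately show ?thesis
    using card_Int_diff_le[OF assms _ \<open>card _ = card A\<close>, of B] assms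
    by (simp add: uniform_content_def diff_divide_distrib[symmetric] divide_right_mono)
qed

lemma folner_almost_invariant_content:
  assumes "folner_condition TYPE('a::group_add)" "finite I" "\<forall>(g, B, d)\<in>I. 0 < d"
  shows "\<exists>\<mu>\<in>prob_contents. \<forall>(g::'a, B, d)\<in>I. \<bar>\<mu> ((\<lambda>a. g + a) ` B) - \<mu> B\<bar> \<le> d"
proof -
  define e where "e = Min (insert 1 ((\<lambda>(g, B, d). d) ` I))"
  have "e > 0" using assms(2,3) unfolding e_def by (subst Min_gr_iff) auto
  obtain A where A: "finite A" "A \<noteq> {}"
    "\<forall>h\<in>(\<lambda>(g, B, d). - g) ` I. real (card ((\<lambda>a. h + a) ` A - A)) \<le> e * real (card A)"
    using assms(1,2) \<open>e > 0\<close> unfolding folner_condition_def by blast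
  have "\<bar>uniform_content A ((\<lambda>a. g + a) ` B) - uniform_content A B\<bar> \<le> d"
    if "(g, B, d) \<in> I" for g B d
  proof -
    have "\<bar>uniform_content A ((\<lambda>a. g + a) ` B) - uniform_content A B\<bar>
        \<le> real (card ((\<lambda>a. - g + a) ` A - A)) / real (card A)"
      using A(1) by (rule uniform_content_translate)
    also have "\<dots> \<le> e" using A that by (force simp: divide_le_eq card_gt_0_iff)
    also have "e \<le> d" using assms(2) that unfolding e_def by (intro Min_le) force+
    finally show ?thesis .
  qed
  then show ?thesis using uniform_content_in_prob_contents[OF A(1,2)] by blast
qed

lemma folner_imp_amenable:
  assumes "folner_condition TYPE('a::group_add)"
  shows "amenable TYPE('a)"
proof -
  define I where "I = {(g::'a, B::'a set, d::real). 0 < d}"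
  define almost_inv where
    "almost_inv = (\<lambda>(g::'a, B, d::real). {\<mu>. \<bar>\<mu> ((\<lambda>a. g + a) ` B) - \<mu> B\<bar> \<le> d})"
  have "prob_contents \<inter> (\<Inter>i\<in>I. almost_inv i) \<noteq> {}"
  proof (rule compact_imp_fip_image[OF compact_prob_contents])
    show "closed (almost_inv i)" for i
      unfolding almost_inv_def
      by (auto intro!: closed_Collect_le continuous_intros split: prod.splits)
    show "prob_contents \<inter> (\<Inter>i\<in>I'. almost_inv i) \<noteq> {}" if "finite I'" "I' \<subseteq> I" for I'
      using folner_almost_invariant_content[OF assms that(1)] that(2)
      unfolding I_def almost_inv_def by fast
  qed
  then obtain \<mu> where \<mu>: "\<mu> \<in> prob_contents" "\<And>i. i \<in> I \<Longrightarrow> \<mu> \<in> almost_inv i" by blast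
  have "\<mu> ((\<lambda>a. g + a) ` B) = \<mu> B" for g B
  proof (rule ccontr)
    let ?d = "\<bar>\<mu> ((\<lambda>a. g + a) ` B) - \<mu> B\<bar>"
    assume "\<mu> ((\<lambda>a. g + a) ` B) \<noteq> \<mu> B"
    then have "(g, B, ?d / 2) \<in> I" unfolding I_def by simp
    from \<mu>(2)[OF this] \<open>\<mu> _ \<noteq> \<mu> B\<close> show False unfolding almost_inv_def by simp
  qed
  with \<mu>(1) have "left_invariant_mean \<mu>"
    unfolding left_invariant_mean_def prob_contents_def by auto
  then show ?thesis unfolding amenable_def by blast
qed

text \<open>Folner's condition speaks of left translates h + A, the isoperimetric inequality of right
  translates x + s; inversion turns one into the other.\<close>

lemma card_translate_uminus_diff:
  fixes B :: "'a::group_add set"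
  shows "card ((\<lambda>a. h + a) ` uminus ` B - uminus ` B) = card {x\<in>B. x + - h \<notin> B}"
proof -
  have "(\<lambda>a. h + a) ` uminus ` B - uminus ` B = (\<lambda>x. h + - x) ` {x\<in>B. x + - h \<notin> B}"
  proof (intro equalityI subsetI)
    fix y assume "y \<in> (\<lambda>a. h + a) ` uminus ` B - uminus ` B"
    then obtain x where "x \<in> B" "y = h + - x" "- y \<notin> B" by force
    moreover have "- y = x + - h" using \<open>y = h + - x\<close> by (simp add: minus_add)
    ultimately show "y \<in> (\<lambda>x. h + - x) ` {x\<in>B. x + - h \<notin> B}" by auto
  next
    fix y assume "y \<in> (\<lambda>x. h + - x) ` {x\<in>B. x + - h \<notin> B}"
    then obtain x where "x \<in> B" "x + - h \<notin> B" "y = h + - x" by auto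
    moreover have "- y = x + - h" using \<open>y = h + - x\<close> by (simp add: minus_add)
    moreover have "y \<notin> uminus ` B"
    proof
      assume "y \<in> uminus ` B"
      then have "- y \<in> B" by force
      with \<open>- y = x + - h\<close> \<open>x + - h \<notin> B\<close> show False by simp
    qed
    ultimately show "y \<in> (\<lambda>a. h + a) ` uminus ` B - uminus ` B" by blast
  qed
  moreover have "inj (\<lambda>x::'a. h + - x)"
    by (rule injI) (metis add_left_cancel neg_equal_iff_equal)
  ultimately show ?thesis by (simp add: card_image inj_on_subset)
qed

section \<open>Schur's test for Littlewood functions\<close>

lemma bounded_finite_sums_summable:
  fixes F :: "'b \<Rightarrow> real"
  assumes nonneg: "\<And>y. 0 \<le> F y" and bound: "\<And>Y. finite Y \<Longrightarrow> sum F Y \<le> C"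
  shows "F summable_on UNIV" and "(\<Sum>\<^sub>\<infinity>y. F y) \<le> C"
proof -
  show summable: "F summable_on UNIV"
    using nonneg bound by (intro nonneg_bdd_above_summable_on bdd_aboveI2) auto
  show "(\<Sum>\<^sub>\<infinity>y. F y) \<le> C"
    using bound by (intro infsum_le_finite_sums[OF summable]) auto
qed

lemma sum_of_bool_le_weighted:
  fixes k w :: "'b \<Rightarrow> real"
  assumes "0 < c" "\<And>y. 0 \<le> k y" "\<And>y. 0 \<le> w y" "\<And>y. P y \<Longrightarrow> c \<le> w y"
  shows "(\<Sum>y\<in>Y. of_bool (P y) * k y) \<le> (\<Sum>y\<in>Y. k y * w y) / c"
proof -
  have "of_bool (P y) * k y \<le> k y * w y / c" for y
  proof (cases "P y")
    case True
    then have "k y * 1 \<le> k y * (w y / c)"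
      using assms by (intro mult_left_mono) (auto simp: le_divide_eq)
    then show ?thesis using True by simp
  qed (use assms in simp)
  then show ?thesis unfolding sum_divide_distrib by (rule sum_mono)
qed

lemma littlewood_if_schur_weight:
  fixes f :: "'a::group_add \<Rightarrow> real" and w :: "'a \<Rightarrow> real"
  assumes nonneg: "\<And>g. 0 \<le> f g" and pos: "\<And>x. 0 < w x"
    and row: "\<And>x Y. finite Y \<Longrightarrow> (\<Sum>y\<in>Y. f (- x + y) * w y) \<le> C * w x"
    and col: "\<And>y X. finite X \<Longrightarrow> (\<Sum>x\<in>X. f (- x + y) * w x) \<le> C * w y"
  shows "(\<lambda>g. complex_of_real (f g)) \<in> littlewood"
proof -
  define f1 where "f1 x y = of_bool (w x \<le> w y) * f (- x + y)" for x y
  define f2 where "f2 x y = of_bool (w y < w x) * f (- x + y)" for x y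
  have nonneg12: "0 \<le> f1 x y" "0 \<le> f2 x y" for x y
    unfolding f1_def f2_def using nonneg by auto
  have row_sum: "sum (f1 x) Y \<le> C" if "finite Y" for x Y
  proof -
    have "sum (f1 x) Y \<le> (\<Sum>y\<in>Y. f (- x + y) * w y) / w x"
      unfolding f1_def using pos nonneg less_imp_le[OF pos] by (intro sum_of_bool_le_weighted) auto
    also have "\<dots> \<le> C" using row[OF that, of x] pos[of x] by (simp add: divide_le_eq)
    finally show ?thesis .
  qed
  have col_sum: "(\<Sum>x\<in>X. f2 x y) \<le> C" if "finite X" for y X
  proof -
    have "(\<Sum>x\<in>X. f2 x y) \<le> (\<Sum>x\<in>X. f (- x + y) * w x) / w y"
      unfolding f2_def using pos nonneg less_imp_le[OF pos] by (intro sum_of_bool_le_weighted) auto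
    also have "\<dots> \<le> C" using col[OF that, of y] pos[of y] by (simp add: divide_le_eq)
    finally show ?thesis .
  qed
  have decomp: "\<forall>x y. complex_of_real (f (- x + y))
      = complex_of_real (f1 x y) + complex_of_real (f2 x y)"
    unfolding f1_def f2_def by auto
  have rows: "\<forall>x. (\<lambda>y. norm (complex_of_real (f1 x y))) summable_on UNIV
      \<and> (\<Sum>\<^sub>\<infinity>y. norm (complex_of_real (f1 x y))) \<le> C"
    using bounded_finite_sums_summable[of "f1 _", OF nonneg12(1) row_sum]
    by (simp add: abs_of_nonneg nonneg12)
  have cols: "\<forall>y. (\<lambda>x. norm (complex_of_real (f2 x y))) summable_on UNIV
      \<and> (\<Sum>\<^sub>\<infinity>x. norm (complex_of_real (f2 x y))) \<le> C"
    using bounded_finite_sums_summable[of "\<lambda>x. f2 x _", OF nonneg12(2) col_sum]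
    by (simp add: abs_of_nonneg nonneg12)
  show ?thesis
    unfolding littlewood_def mem_Collect_eq
    by (rule exI[of _ "\<lambda>x y. complex_of_real (f1 x y)"],
        rule exI[of _ "\<lambda>x y. complex_of_real (f2 x y)"])
      (use decomp rows cols in blast)
qed

section \<open>The lazy random walk and its spectral gap\<close>

locale isoperimetric =
  fixes S1 :: "'a::group_add set" and e :: real
  assumes finite_S1: "finite S1"
    and uminus_S1: "s \<in> S1 \<Longrightarrow> - s \<in> S1"
    and e_pos: "e > 0"
    and boundary: "finite B \<Longrightarrow> B \<noteq> {} \<Longrightarrow>
                   \<exists>s\<in>S1. real (card {x\<in>B. x + s \<notin> B}) > e * real (card B)"
begin

lemma S1_nonempty: "S1 \<noteq> {}"
  using boundary[of "{0}"] by auto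

lemma e_less_1: "e < 1"
proof -
  obtain s where "e * real (card {0::'a}) < real (card {x\<in>{0::'a}. x + s \<notin> {0}})"
    using boundary[of "{0}"] by auto
  moreover have "card {x\<in>{0::'a}. x + s \<notin> {0}} \<le> 1"
    by (rule order_trans[OF card_mono[of "{0}"]]) auto
  ultimately show ?thesis by simp
qed

lemma boundary_functional_remove_level:
  fixes \<psi> :: "'a \<Rightarrow> real"
  assumes D: "finite D" "Z \<subseteq> D" and Z: "Z = {x. \<psi> x \<noteq> 0}" "Z \<noteq> {}"
    and nonneg: "\<And>x. 0 \<le> \<psi> x" and c: "0 < c" "\<And>x. x \<in> Z \<Longrightarrow> c \<le> \<psi> x"
    and \<psi>': "\<psi>' = (\<lambda>x. \<psi> x - c * of_bool (x \<in> Z))"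
    and bound': "e * (\<Sum>x\<in>D. \<psi>' x) \<le> (\<Sum>s\<in>S1. \<Sum>x\<in>D. max 0 (\<psi>' x - \<psi>' (x + s)))"
  shows "e * (\<Sum>x\<in>D. \<psi> x) \<le> (\<Sum>s\<in>S1. \<Sum>x\<in>D. max 0 (\<psi> x - \<psi> (x + s)))"
proof -
  have "finite Z" using D finite_subset by blast
  obtain s0 where s0: "s0 \<in> S1" "e * real (card Z) < real (card {x\<in>Z. x + s0 \<notin> Z})"
    using boundary[OF \<open>finite Z\<close> Z(2)] by blast
  have "(\<Sum>x\<in>D. max 0 (\<psi> x - \<psi> (x + s)))
      = (\<Sum>x\<in>D. max 0 (\<psi>' x - \<psi>' (x + s))) + c * real (card {x\<in>Z. x + s \<notin> Z})" for s
    unfolding \<psi>' using nonneg c(2) by (intro sum_max_diff_remove_level[OF D]) (auto simp: Z(1))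
  then have "(\<Sum>s\<in>S1. \<Sum>x\<in>D. max 0 (\<psi> x - \<psi> (x + s)))
      = (\<Sum>s\<in>S1. \<Sum>x\<in>D. max 0 (\<psi>' x - \<psi>' (x + s)))
        + c * (\<Sum>s\<in>S1. real (card {x\<in>Z. x + s \<notin> Z}))"
    by (simp add: sum.distrib sum_distrib_left)
  moreover have "real (card {x\<in>Z. x + s0 \<notin> Z}) \<le> (\<Sum>s\<in>S1. real (card {x\<in>Z. x + s \<notin> Z}))"
    using s0(1) finite_S1 by (intro member_le_sum) auto
  then have "c * (e * real (card Z)) \<le> c * (\<Sum>s\<in>S1. real (card {x\<in>Z. x + s \<notin> Z}))"
    using s0(2) c(1) by (intro mult_left_mono) auto
  moreover have "(\<Sum>x\<in>D. \<psi> x) = (\<Sum>x\<in>D. \<psi>' x) + c * real (card Z)"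
    using D by (simp add: \<psi>' sum_subtractf Int_absorb1)
  ultimately show ?thesis
    using bound' by (simp add: algebra_simps)
qed

text \<open>Discrete co-area argument: remove the lowest nonzero level of \<psi> and apply the
  isoperimetric inequality to its support.\<close>

lemma boundary_functional:
  assumes D: "finite D" and nonneg: "\<And>x. 0 \<le> \<psi> x" and supp: "\<And>x. \<psi> x \<noteq> 0 \<Longrightarrow> x \<in> D"
  shows "e * (\<Sum>x\<in>D. \<psi> x) \<le> (\<Sum>s\<in>S1. \<Sum>x\<in>D. max 0 (\<psi> x - \<psi> (x + s)))"
  using nonneg supp
proof (induction "card {x. \<psi> x \<noteq> 0}" arbitrary: \<psi> rule: less_induct)
  case less
  define Z where "Z = {x. \<psi> x \<noteq> 0}"
  have "Z \<subseteq> D" using less.prems(2) unfolding Z_def by auto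
  then have "finite Z" using D finite_subset by blast
  show ?case
  proof (cases "Z = {}")
    case True
    then show ?thesis by (simp add: Z_def sum_nonneg)
  next
    case False
    define c where "c = Min (\<psi> ` Z)"
    have "c \<in> \<psi> ` Z" unfolding c_def using \<open>finite Z\<close> False by (intro Min_in) auto
    then obtain z where z: "z \<in> Z" "\<psi> z = c" by auto
    have c_le: "c \<le> \<psi> x" if "x \<in> Z" for x
      unfolding c_def using \<open>finite Z\<close> that by simp
    have "c > 0" using z less.prems(1)[of z] unfolding Z_def by auto
    define \<psi>' where "\<psi>' = (\<lambda>x. \<psi> x - c * of_bool (x \<in> Z))"
    have nonneg': "0 \<le> \<psi>' x" for x
      unfolding \<psi>'_def using c_le less.prems(1) by (cases "x \<in> Z") auto
    have "{x. \<psi>' x \<noteq> 0} \<subseteq> Z - {z}"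
      unfolding \<psi>'_def Z_def using z by (auto simp: Z_def)
    then have "card {x. \<psi>' x \<noteq> 0} < card Z"
      using \<open>finite Z\<close> z(1) by (meson card_Diff1_less card_mono finite_Diff le_less_trans)
    then have "e * (\<Sum>x\<in>D. \<psi>' x) \<le> (\<Sum>s\<in>S1. \<Sum>x\<in>D. max 0 (\<psi>' x - \<psi>' (x + s)))"
      using less.hyps[of \<psi>'] nonneg' \<open>Z \<subseteq> D\<close> \<open>{x. \<psi>' x \<noteq> 0} \<subseteq> Z - {z}\<close>
      unfolding Z_def by blast
    then show ?thesis
      using boundary_functional_remove_level[OF D \<open>Z \<subseteq> D\<close> Z_def False less.prems(1) \<open>c > 0\<close>
          c_le \<psi>'_def] by blast
  qed
qed

definition steps :: "'a set" where
  "steps = insert 0 S1"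

text \<open>The walk is lazy, staying put with probability 1/2; this is what
  lazy_mean_sq_le needs.\<close>

definition step_prob :: "'a \<Rightarrow> real" where
  "step_prob s = of_bool (s = 0) / 2 + of_bool (s \<in> S1) / (2 * real (card S1))"

definition markov :: "('a \<Rightarrow> real) \<Rightarrow> 'a \<Rightarrow> real" where
  "markov \<phi> x = (\<Sum>s\<in>steps. step_prob s * \<phi> (x + s))"

lemma card_S1_pos: "real (card S1) > 0"
  using finite_S1 S1_nonempty by (simp add: card_gt_0_iff)

lemma finite_steps: "finite steps"
  unfolding steps_def using finite_S1 by simp

lemma zero_in_steps: "0 \<in> steps" and S1_subset_steps: "S1 \<subseteq> steps"
  unfolding steps_def by auto

lemma uminus_steps: "s \<in> steps \<Longrightarrow> - s \<in> steps"
  unfolding steps_def using uminus_S1 by auto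

lemma step_prob_nonneg: "0 \<le> step_prob s"
  unfolding step_prob_def by simp

lemma step_prob_zero: "1/2 \<le> step_prob 0"
  unfolding step_prob_def by simp

lemma step_prob_S1: "s \<in> S1 \<Longrightarrow> 1 / (2 * real (card S1)) \<le> step_prob s"
  unfolding step_prob_def by simp

lemma step_prob_pos: "s \<in> steps \<Longrightarrow> 0 < step_prob s"
  unfolding steps_def step_prob_def using card_S1_pos by (auto simp: add_pos_nonneg)

lemma step_prob_uminus: "step_prob (- s) = step_prob s"
  unfolding step_prob_def using uminus_S1[of s] uminus_S1[of "- s"] by auto

lemma sum_step_prob: "(\<Sum>s\<in>steps. step_prob s) = 1"
proof -
  have "(\<Sum>s\<in>steps. step_prob s)
      = (\<Sum>s\<in>steps. of_bool (s = 0) / 2) + (\<Sum>s\<in>steps. of_bool (s \<in> S1) / (2 * real (card S1)))"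
    unfolding step_prob_def by (simp add: sum.distrib)
  also have "\<dots> = 1/2 + real (card S1) / (2 * real (card S1))"
    using finite_steps zero_in_steps S1_subset_steps
    by (simp add: Int_absorb1 flip: sum_divide_distrib)
  finally show ?thesis using card_S1_pos by simp
qed

lemma markov_mono: "(\<And>x. \<phi> x \<le> \<psi> x) \<Longrightarrow> markov \<phi> x \<le> markov \<psi> x"
  unfolding markov_def by (intro sum_mono mult_left_mono) (auto simp: step_prob_nonneg)

lemma markov_nonneg: "(\<And>x. 0 \<le> \<phi> x) \<Longrightarrow> 0 \<le> markov \<phi> x"
  unfolding markov_def by (intro sum_nonneg mult_nonneg_nonneg) (auto simp: step_prob_nonneg)

lemma markov_scale: "markov (\<lambda>x. c * \<phi> x) x = c * markov \<phi> x"
  unfolding markov_def by (simp add: sum_distrib_left algebra_simps)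

lemma sum_sq_translate:
  fixes \<phi> :: "'a \<Rightarrow> real"
  assumes D: "finite D" and supp: "\<forall>s\<in>steps. \<forall>x. \<phi> (x + s) \<noteq> 0 \<longrightarrow> x \<in> D"
    and "s \<in> steps"
  shows "(\<Sum>x\<in>D. (\<phi> (x + s))\<^sup>2) = (\<Sum>x\<in>D. (\<phi> x)\<^sup>2)"
proof (rule sum_translate[OF D, of "\<lambda>x. (\<phi> x)\<^sup>2"])
  show "x \<in> D" if "(\<phi> (x + s))\<^sup>2 \<noteq> 0" for x
    using that supp \<open>s \<in> steps\<close> by simp
  show "x \<in> D" if "(\<phi> x)\<^sup>2 \<noteq> 0" for x
    using that supp zero_in_steps by fastforce
qed

lemma sum_sq_add_translate_le:
  fixes \<phi> :: "'a \<Rightarrow> real"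
  assumes D: "finite D" and supp: "\<forall>s\<in>steps. \<forall>x. \<phi> (x + s) \<noteq> 0 \<longrightarrow> x \<in> D"
  shows "(\<Sum>(s, x)\<in>S1 \<times> D. (\<phi> x + \<phi> (x + s))\<^sup>2)
           \<le> 4 * real (card S1) * (\<Sum>x\<in>D. (\<phi> x)\<^sup>2)"
proof -
  define N where "N = (\<Sum>x\<in>D. (\<phi> x)\<^sup>2)"
  have "(\<Sum>(s, x)\<in>S1 \<times> D. (\<phi> x + \<phi> (x + s))\<^sup>2)
      \<le> (\<Sum>(s, x)\<in>S1 \<times> D. 2 * (\<phi> x)\<^sup>2 + 2 * (\<phi> (x + s))\<^sup>2)"
  proof -
    have "(a + b)\<^sup>2 \<le> 2 * a\<^sup>2 + 2 * b\<^sup>2" for a b :: real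
      using zero_le_power2[of "a - b"] unfolding power2_diff power2_sum by linarith
    then show ?thesis by (intro sum_mono) auto
  qed
  also have "\<dots> = (\<Sum>s\<in>S1. 2 * N + 2 * N)"
    unfolding sum.cartesian_product[symmetric]
  proof (rule sum.cong[OF refl])
    fix s assume "s \<in> S1"
    then have "(\<Sum>x\<in>D. (\<phi> (x + s))\<^sup>2) = N"
      unfolding N_def using S1_subset_steps by (intro sum_sq_translate[OF D supp]) auto
    then show "(\<Sum>x\<in>D. 2 * (\<phi> x)\<^sup>2 + 2 * (\<phi> (x + s))\<^sup>2) = 2 * N + 2 * N"
      by (simp add: N_def sum.distrib flip: sum_distrib_left)
  qed
  finally show ?thesis unfolding N_def by simp
qed

text \<open>A Cheeger-type estimate: boundary_functional for \<phi>^2, then Cauchy-Schwarz.\<close>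

lemma dirichlet_lower_bound:
  fixes \<phi> :: "'a \<Rightarrow> real"
  assumes D: "finite D" and supp: "\<forall>s\<in>steps. \<forall>x. \<phi> (x + s) \<noteq> 0 \<longrightarrow> x \<in> D"
    and nonneg: "\<And>x. 0 \<le> \<phi> x"
  shows "e\<^sup>2 * (\<Sum>x\<in>D. (\<phi> x)\<^sup>2)
           \<le> 4 * real (card S1) * (\<Sum>s\<in>S1. \<Sum>x\<in>D. (\<phi> (x + s) - \<phi> x)\<^sup>2)"
proof -
  define N where "N = (\<Sum>x\<in>D. (\<phi> x)\<^sup>2)"
  define E where "E = (\<Sum>(s, x)\<in>S1 \<times> D. (\<phi> (x + s) - \<phi> x)\<^sup>2)"
  define F where "F = (\<Sum>(s, x)\<in>S1 \<times> D. (\<phi> x + \<phi> (x + s))\<^sup>2)"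
  have diff_sq: "max 0 (a\<^sup>2 - b\<^sup>2) \<le> \<bar>b - a\<bar> * (a + b)" if "0 \<le> a" "0 \<le> b" for a b :: real
  proof -
    have "a\<^sup>2 - b\<^sup>2 = (a - b) * (a + b)" by (simp add: power2_eq_square algebra_simps)
    also have "\<dots> \<le> \<bar>b - a\<bar> * (a + b)" using that by (intro mult_right_mono) auto
    finally show ?thesis using that by simp
  qed
  have "e * N \<le> (\<Sum>s\<in>S1. \<Sum>x\<in>D. max 0 ((\<phi> x)\<^sup>2 - (\<phi> (x + s))\<^sup>2))"
    unfolding N_def using supp zero_in_steps by (intro boundary_functional[OF D]) fastforce+
  also have "\<dots> \<le> (\<Sum>(s, x)\<in>S1 \<times> D. \<bar>\<phi> (x + s) - \<phi> x\<bar> * (\<phi> x + \<phi> (x + s)))"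
    unfolding sum.cartesian_product[symmetric] using diff_sq nonneg by (intro sum_mono) auto
  finally have "(e * N)\<^sup>2 \<le> (\<Sum>(s, x)\<in>S1 \<times> D. \<bar>\<phi> (x + s) - \<phi> x\<bar> * (\<phi> x + \<phi> (x + s)))\<^sup>2"
    using e_pos by (intro power_mono) (auto simp: N_def intro!: mult_nonneg_nonneg sum_nonneg)
  also have "\<dots> \<le> E * F"
    using Cauchy_Schwarz_ineq_sum[of "\<lambda>(s, x). \<bar>\<phi> (x + s) - \<phi> x\<bar>"
        "\<lambda>(s, x). \<phi> x + \<phi> (x + s)" "S1 \<times> D"]
    unfolding E_def F_def by (simp add: case_prod_beta)
  finally have CS: "(e * N)\<^sup>2 \<le> E * F" .
  moreover have "F \<le> 4 * real (card S1) * N"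
    unfolding F_def N_def by (rule sum_sq_add_translate_le[OF D supp])
  moreover have "N \<ge> 0" "E \<ge> 0" unfolding N_def E_def by (auto intro: sum_nonneg)
  ultimately have "(e * N)\<^sup>2 \<le> E * (4 * real (card S1) * N)"
    using CS by (meson mult_left_mono order_trans)
  then have "e\<^sup>2 * N * N \<le> (4 * real (card S1) * E) * N"
    by (simp add: power2_eq_square algebra_simps)
  then have "e\<^sup>2 * N \<le> 4 * real (card S1) * E"
    using \<open>N \<ge> 0\<close> \<open>E \<ge> 0\<close> card_S1_pos
    by (cases "N = 0") (auto simp: mult_le_cancel_right)
  then show ?thesis
    unfolding N_def E_def sum.cartesian_product[symmetric] by simp
qed

definition spectral_bound :: real where
  "spectral_bound = 1 - e\<^sup>2 / (32 * (real (card S1))\<^sup>2)"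

lemma spectral_bound_nonneg: "0 \<le> spectral_bound"
proof -
  have "e\<^sup>2 \<le> 1" using e_pos e_less_1 by (simp add: power_le_one)
  moreover have "1 \<le> real (card S1)"
    using finite_S1 S1_nonempty by (simp add: Suc_le_eq card_gt_0_iff)
  then have "1 \<le> 32 * (real (card S1))\<^sup>2" using one_le_power[of "real (card S1)" 2] by linarith
  ultimately show ?thesis unfolding spectral_bound_def by (simp add: divide_le_eq)
qed

lemma spectral_bound_less_1: "spectral_bound < 1"
  unfolding spectral_bound_def using e_pos card_S1_pos by simp

lemma sum_sq_markov_le:
  fixes \<phi> :: "'a \<Rightarrow> real"
  assumes D: "finite D" and supp: "\<forall>s\<in>steps. \<forall>x. \<phi> (x + s) \<noteq> 0 \<longrightarrow> x \<in> D"
  shows "(\<Sum>x\<in>D. (markov \<phi> x)\<^sup>2) \<le> (\<Sum>x\<in>D. (\<phi> x)\<^sup>2)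
           - 1/4 * (\<Sum>s\<in>steps. step_prob s * (\<Sum>x\<in>D. (\<phi> (x + s) - \<phi> x)\<^sup>2))"
proof -
  define N where "N = (\<Sum>x\<in>D. (\<phi> x)\<^sup>2)"
  define T where "T = (\<Sum>s\<in>steps. step_prob s * (\<Sum>x\<in>D. (\<phi> (x + s) - \<phi> x)\<^sup>2))"
  have "(\<Sum>x\<in>D. (markov \<phi> x)\<^sup>2) \<le> (\<Sum>x\<in>D. (\<Sum>s\<in>steps. step_prob s * (\<phi> (x + s))\<^sup>2)
          - 1/4 * (\<Sum>s\<in>steps. step_prob s * (\<phi> (x + s) - \<phi> x)\<^sup>2))"
    unfolding markov_def
  proof (rule sum_mono)
    fix x
    show "(\<Sum>s\<in>steps. step_prob s * \<phi> (x + s))\<^sup>2 \<le> (\<Sum>s\<in>steps. step_prob s * (\<phi> (x + s))\<^sup>2)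
          - 1/4 * (\<Sum>s\<in>steps. step_prob s * (\<phi> (x + s) - \<phi> x)\<^sup>2)"
      using lazy_mean_sq_le[OF finite_steps zero_in_steps sum_step_prob step_prob_nonneg
          step_prob_zero, of "\<lambda>s. \<phi> (x + s)"] by simp
  qed
  also have "\<dots> = N - 1/4 * T"
  proof -
    have shift: "(\<Sum>x\<in>D. (\<phi> (x + s))\<^sup>2) = N" if "s \<in> steps" for s
      using sum_sq_translate[OF D supp that] unfolding N_def .
    have "(\<Sum>x\<in>D. \<Sum>s\<in>steps. step_prob s * (\<phi> (x + s))\<^sup>2) = (\<Sum>s\<in>steps. step_prob s * N)"
      by (subst sum.swap) (simp add: shift flip: sum_distrib_left)
    also have "\<dots> = N" using sum_step_prob by (simp flip: sum_distrib_right)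
    moreover have "(\<Sum>x\<in>D. \<Sum>s\<in>steps. step_prob s * (\<phi> (x + s) - \<phi> x)\<^sup>2) = T"
      unfolding T_def by (subst sum.swap) (simp add: sum_distrib_left)
    ultimately show ?thesis by (simp add: sum_subtractf flip: sum_divide_distrib)
  qed
  finally show ?thesis unfolding N_def T_def .
qed

lemma markov_l2_contraction:
  fixes \<phi> :: "'a \<Rightarrow> real"
  assumes D: "finite D" and supp: "\<forall>s\<in>steps. \<forall>x. \<phi> (x + s) \<noteq> 0 \<longrightarrow> x \<in> D"
    and nonneg: "\<And>x. 0 \<le> \<phi> x"
  shows "(\<Sum>x\<in>D. (markov \<phi> x)\<^sup>2) \<le> spectral_bound * (\<Sum>x\<in>D. (\<phi> x)\<^sup>2)"
proof -
  define m where "m = real (card S1)"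
  define N where "N = (\<Sum>x\<in>D. (\<phi> x)\<^sup>2)"
  define E where "E = (\<Sum>s\<in>S1. \<Sum>x\<in>D. (\<phi> (x + s) - \<phi> x)\<^sup>2)"
  define T where "T = (\<Sum>s\<in>steps. step_prob s * (\<Sum>x\<in>D. (\<phi> (x + s) - \<phi> x)\<^sup>2))"
  have "E / (2 * m) = (\<Sum>s\<in>S1. 1 / (2 * m) * (\<Sum>x\<in>D. (\<phi> (x + s) - \<phi> x)\<^sup>2))"
    unfolding E_def by (simp add: sum_divide_distrib)
  also have "\<dots> \<le> (\<Sum>s\<in>S1. step_prob s * (\<Sum>x\<in>D. (\<phi> (x + s) - \<phi> x)\<^sup>2))"
    unfolding m_def using step_prob_S1
    by (intro sum_mono mult_right_mono) (auto intro: sum_nonneg)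
  also have "\<dots> \<le> T"
    unfolding T_def using finite_steps S1_subset_steps
    by (intro sum_mono2) (auto intro!: mult_nonneg_nonneg sum_nonneg step_prob_nonneg)
  finally have "E \<le> 2 * m * T" using card_S1_pos by (simp add: m_def divide_le_eq mult.commute)
  have "e\<^sup>2 * N \<le> 4 * m * E"
    using dirichlet_lower_bound[OF D supp nonneg] unfolding N_def E_def m_def .
  also have "\<dots> \<le> 4 * m * (2 * m * T)"
    using \<open>E \<le> 2 * m * T\<close> card_S1_pos by (simp add: m_def mult.commute mult.left_commute)
  finally have "e\<^sup>2 / (32 * m\<^sup>2) * N \<le> 1/4 * T"
    using card_S1_pos by (simp add: m_def field_simps power2_eq_square)
  then show ?thesis
    using sum_sq_markov_le[OF D supp] unfolding spectral_bound_def m_def N_def T_def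
    by (simp add: algebra_simps)
qed

primrec walk :: "nat \<Rightarrow> 'a \<Rightarrow> real" where
  "walk 0 = (\<lambda>g. of_bool (g = 0))"
| "walk (Suc n) = markov (walk n)"

definition walk_support :: "nat \<Rightarrow> 'a set" where
  "walk_support n = {g. walk n g \<noteq> 0}"

definition walk_pred_support :: "nat \<Rightarrow> 'a set" where
  "walk_pred_support n = (\<lambda>(z, s). z + - s) ` (walk_support n \<times> steps)"

lemma walk_nonneg: "0 \<le> walk n g"
  by (induction n arbitrary: g) (auto intro: markov_nonneg)

lemma walk_support_0: "walk_support 0 = {0}"
  unfolding walk_support_def by auto

lemma walk_pred_support_covers:
  "\<forall>s\<in>steps. \<forall>x. walk n (x + s) \<noteq> 0 \<longrightarrow> x \<in> walk_pred_support n"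
  unfolding walk_pred_support_def walk_support_def
  by (auto intro!: image_eqI[where x="(_ + _, _)"] simp: add.assoc)

lemma walk_support_subset_pred: "walk_support n \<subseteq> walk_pred_support n"
  using walk_pred_support_covers[of n] zero_in_steps unfolding walk_support_def by force

lemma walk_support_Suc_subset: "walk_support (Suc n) \<subseteq> walk_pred_support n"
proof
  fix g assume "g \<in> walk_support (Suc n)"
  then have "(\<Sum>s\<in>steps. step_prob s * walk n (g + s)) \<noteq> 0"
    unfolding walk_support_def by (simp add: markov_def)
  then obtain s where "s \<in> steps" "walk n (g + s) \<noteq> 0"
    using sum.not_neutral_contains_not_neutral by force
  then show "g \<in> walk_pred_support n" using walk_pred_support_covers by blast
qed

lemma finite_walk_support: "finite (walk_support n)"
  and card_walk_support: "card (walk_support n) \<le> card steps ^ n"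
proof (induction n)
  case 0
  { case 1 show ?case by (simp add: walk_support_0) }
  { case 2 show ?case by (simp add: walk_support_0) }
next
  case (Suc n)
  have fin: "finite (walk_pred_support n)"
    unfolding walk_pred_support_def using Suc.IH(1) finite_steps by simp
  { case 1 show ?case using finite_subset[OF walk_support_Suc_subset fin] . }
  { case 2
    have "card (walk_support (Suc n)) \<le> card (walk_pred_support n)"
      using fin walk_support_Suc_subset by (rule card_mono)
    also have "\<dots> \<le> card (walk_support n \<times> steps)"
      unfolding walk_pred_support_def by (rule card_image_le) (use Suc.IH(1) finite_steps in simp)
    also have "\<dots> \<le> card steps ^ n * card steps"
      using Suc.IH(2) by (simp add: card_cartesian_product)
    finally show ?case by (simp add: mult.commute) }
qed

lemma finite_walk_pred_support: "finite (walk_pred_support n)"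
  unfolding walk_pred_support_def using finite_walk_support finite_steps by simp

lemma sum_walk_pred_support:
  "(\<Sum>g\<in>walk_pred_support n. f (walk n g)) = (\<Sum>g\<in>walk_support n. f (walk n g))"
  if "f 0 = 0"
  using finite_walk_pred_support walk_support_subset_pred that
  by (intro sum.mono_neutral_right) (auto simp: walk_support_def)

lemma sum_walk: "(\<Sum>g\<in>walk_support n. walk n g) = 1"
proof (induction n)
  case 0
  then show ?case by (simp add: walk_support_0)
next
  case (Suc n)
  have "(\<Sum>g\<in>walk_support (Suc n). walk (Suc n) g) = (\<Sum>g\<in>walk_pred_support n. walk (Suc n) g)"
    using finite_walk_pred_support walk_support_Suc_subset
    by (intro sum.mono_neutral_left) (auto simp: walk_support_def)
  also have "\<dots> = (\<Sum>s\<in>steps. step_prob s * (\<Sum>g\<in>walk_pred_support n. walk n (g + s)))"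
    by (simp add: markov_def sum_distrib_left) (rule sum.swap)
  also have "\<dots> = (\<Sum>s\<in>steps. step_prob s * (\<Sum>g\<in>walk_pred_support n. walk n g))"
    using walk_pred_support_covers[of n] walk_support_subset_pred[of n] zero_in_steps
    by (intro sum.cong refl arg_cong2[where f = "(*)"] sum_translate[OF finite_walk_pred_support])
      (fastforce simp: walk_support_def)+
  finally show ?case
    using Suc sum_walk_pred_support[of id n] sum_step_prob by (simp flip: sum_distrib_right)
qed

lemma sum_sq_walk: "(\<Sum>g\<in>walk_support n. (walk n g)\<^sup>2) \<le> spectral_bound ^ n"
proof (induction n)
  case 0
  then show ?case by (simp add: walk_support_0)
next
  case (Suc n)
  have "(\<Sum>g\<in>walk_support (Suc n). (walk (Suc n) g)\<^sup>2)
      = (\<Sum>g\<in>walk_pred_support n. (walk (Suc n) g)\<^sup>2)"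
    using finite_walk_pred_support walk_support_Suc_subset
    by (intro sum.mono_neutral_left) (auto simp: walk_support_def)
  also have "\<dots> \<le> spectral_bound * (\<Sum>g\<in>walk_pred_support n. (walk n g)\<^sup>2)"
    unfolding walk.simps
    by (rule markov_l2_contraction[OF finite_walk_pred_support walk_pred_support_covers
          walk_nonneg])
  also have "\<dots> \<le> spectral_bound * spectral_bound ^ n"
    using Suc spectral_bound_nonneg sum_walk_pred_support[of "\<lambda>t. t\<^sup>2" n]
    by (intro mult_left_mono) auto
  finally show ?case by simp
qed

definition decay_rate :: real where
  "decay_rate = sqrt spectral_bound"

lemma decay_rate_nonneg: "0 \<le> decay_rate" and decay_rate_less_1: "decay_rate < 1"
  unfolding decay_rate_def using spectral_bound_nonneg spectral_bound_less_1 by auto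

lemma smaller_rate:
  assumes "0 \<le> r" "r \<le> \<rho>" "\<rho> * decay_rate < 1"
  shows "r * decay_rate < 1"
  using assms decay_rate_nonneg mult_right_mono[of r \<rho> decay_rate] by linarith

lemma walk_le_decay: "walk n g \<le> decay_rate ^ n"
proof (rule power2_le_imp_le)
  have "(walk n g)\<^sup>2 \<le> (\<Sum>g\<in>walk_support n. (walk n g)\<^sup>2)"
    using finite_walk_support by (cases "g \<in> walk_support n")
      (auto intro: member_le_sum sum_nonneg simp: walk_support_def)
  also have "\<dots> \<le> (decay_rate\<^sup>2) ^ n"
    using sum_sq_walk spectral_bound_nonneg by (simp add: decay_rate_def)
  finally show "(walk n g)\<^sup>2 \<le> (decay_rate ^ n)\<^sup>2" by (simp add: power_mult[symmetric] mult.commute)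
  show "0 \<le> decay_rate ^ n" using decay_rate_nonneg by simp
qed

lemma walk_Suc_left: "walk (Suc n) g = (\<Sum>s\<in>steps. step_prob s * walk n (- s + g))"
proof (induction n arbitrary: g)
  case 0
  have "(\<Sum>s\<in>steps. step_prob s * of_bool (g + s = 0))
      = (\<Sum>s\<in>steps. if s = - g then step_prob s else 0)"
    by (intro sum.cong refl) (auto simp: add_eq_0_iff2)
  also have "\<dots> = (\<Sum>s\<in>steps. if s = g then step_prob s else 0)"
    using finite_steps uminus_steps[of g] uminus_steps[of "- g"] step_prob_uminus[of g]
    by (simp add: sum.delta')
  also have "\<dots> = (\<Sum>s\<in>steps. step_prob s * of_bool (- s + g = 0))"
    by (intro sum.cong refl) (auto simp: add_eq_0_iff2)
  finally show ?case by (simp add: markov_def)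
next
  case (Suc n)
  have "walk (Suc (Suc n)) g
      = (\<Sum>s\<in>steps. step_prob s * (\<Sum>t\<in>steps. step_prob t * walk n (- t + (g + s))))"
    using Suc by (simp add: markov_def)
  also have "\<dots> = (\<Sum>t\<in>steps. step_prob t * (\<Sum>s\<in>steps. step_prob s * walk n ((- t + g) + s)))"
    unfolding sum_distrib_left by (subst sum.swap) (simp add: add.assoc mult.left_commute)
  finally show ?case by (simp add: markov_def)
qed

lemma walk_uminus: "walk n (- g) = walk n g"
proof (induction n arbitrary: g)
  case (Suc n)
  have "walk (Suc n) (- g) = (\<Sum>s\<in>steps. step_prob s * walk n (- g + s))"
    by (simp add: markov_def)
  also have "\<dots> = (\<Sum>s\<in>steps. step_prob s * walk n (- s + g))"
    using Suc by (metis minus_add minus_minus)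
  finally show ?case by (simp only: walk_Suc_left)
qed simp

subsection \<open>Green functions\<close>

definition green :: "real \<Rightarrow> 'a \<Rightarrow> real" where
  "green \<rho> g = (\<Sum>n. \<rho> ^ n * walk n g)"

lemma summable_green:
  assumes "0 \<le> \<rho>" "\<rho> * decay_rate < 1"
  shows "summable (\<lambda>n. \<rho> ^ n * walk n g)"
proof (rule summable_comparison_test'[where N = 0])
  show "summable (\<lambda>n. (\<rho> * decay_rate) ^ n)"
    using assms decay_rate_nonneg by (intro summable_geometric) simp
  show "norm (\<rho> ^ n * walk n g) \<le> (\<rho> * decay_rate) ^ n" for n
  proof -
    have "\<rho> ^ n * walk n g \<le> \<rho> ^ n * decay_rate ^ n"
      using assms walk_le_decay[of n g] by (intro mult_left_mono) auto
    then show ?thesis using assms walk_nonneg[of n g] by (simp add: power_mult_distrib)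
  qed
qed

lemma walk_le_green:
  assumes "0 \<le> \<rho>" "\<rho> * decay_rate < 1"
  shows "\<rho> ^ n * walk n g \<le> green \<rho> g"
proof -
  have "(\<Sum>i\<in>{n}. \<rho> ^ i * walk i g) \<le> green \<rho> g"
    unfolding green_def using assms walk_nonneg by (intro sum_le_suminf summable_green) auto
  then show ?thesis by simp
qed

lemma green_nonneg:
  assumes "0 \<le> \<rho>" "\<rho> * decay_rate < 1"
  shows "0 \<le> green \<rho> g"
  unfolding green_def using assms walk_nonneg by (intro suminf_nonneg summable_green) auto

text \<open>The Green function vanishes off the set reachable from 0, i.e. off the subgroup generated
  by S1. Transporting it to every left coset through a chosen representative gives a weight that
  is positive everywhere and, since steps never leave a coset, still satisfies
  markov w \<le> w / \<rho>.\<close>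

definition reachable :: "'a set" where
  "reachable = {g. \<exists>n. 0 < walk n g}"

lemma zero_reachable: "0 \<in> reachable"
  unfolding reachable_def by (auto intro: exI[of _ 0])

lemma uminus_reachable: "h \<in> reachable \<Longrightarrow> - h \<in> reachable"
  unfolding reachable_def by (simp add: walk_uminus)

lemma reachable_step:
  assumes "s \<in> steps"
  shows "- s + h \<in> reachable \<longleftrightarrow> h \<in> reachable"
proof
  have step: "0 < walk (Suc n) g" if "0 < walk n (- s + g)" "s \<in> steps" for n g s
  proof -
    have "0 < step_prob s * walk n (- s + g)" using that step_prob_pos by simp
    also have "\<dots> \<le> walk (Suc n) g"
      unfolding walk_Suc_left using that finite_steps step_prob_nonneg walk_nonneg
      by (intro member_le_sum[where f = "\<lambda>t. step_prob t * walk n (- t + g)"]) auto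
    finally show ?thesis .
  qed
  show "h \<in> reachable" if "- s + h \<in> reachable"
    using that step[OF _ assms] unfolding reachable_def by blast
  show "- s + h \<in> reachable" if h: "h \<in> reachable"
  proof -
    obtain n where "0 < walk n h" using h unfolding reachable_def by blast
    then have "0 < walk n (- (- s) + (- s + h))" by (simp add: add.assoc[symmetric])
    then have "0 < walk (Suc n) (- s + h)" using step uminus_steps[OF assms] by blast
    then show ?thesis unfolding reachable_def by blast
  qed
qed

definition reach_rep :: "'a \<Rightarrow> 'a" where
  "reach_rep x = (SOME y. - x + y \<in> reachable)"

lemma reach_rep_step:
  assumes "s \<in> steps"
  shows "reach_rep (x + s) = reach_rep x"
proof -
  have "- (x + s) + y \<in> reachable \<longleftrightarrow> - x + y \<in> reachable" for y
    using reachable_step[OF assms, of "- x + y"] by (simp only: minus_add add.assoc)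
  then show ?thesis unfolding reach_rep_def by (simp only:)
qed

lemma reach_rep_reachable: "- reach_rep x + x \<in> reachable"
proof -
  have "- x + x \<in> reachable" using zero_reachable by simp
  then have "- x + reach_rep x \<in> reachable" unfolding reach_rep_def by (rule someI)
  from uminus_reachable[OF this] show ?thesis by (simp add: minus_add)
qed

lemma green_pos:
  assumes "0 < \<rho>" "\<rho> * decay_rate < 1" "g \<in> reachable"
  shows "0 < green \<rho> g"
proof -
  obtain n where "0 < walk n g" using assms(3) unfolding reachable_def by blast
  then have "0 < \<rho> ^ n * walk n g" using assms(1) by simp
  also have "\<dots> \<le> green \<rho> g" using assms(1,2) by (intro walk_le_green) auto
  finally show ?thesis .
qed

definition schur_weight :: "real \<Rightarrow> 'a \<Rightarrow> real" where
  "schur_weight \<rho> x = green \<rho> (- reach_rep x + x)"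

lemma schur_weight_pos: "0 < \<rho> \<Longrightarrow> \<rho> * decay_rate < 1 \<Longrightarrow> 0 < schur_weight \<rho> x"
  unfolding schur_weight_def using green_pos reach_rep_reachable by blast

lemma markov_schur_weight:
  assumes "0 < \<rho>" "\<rho> * decay_rate < 1"
  shows "markov (schur_weight \<rho>) x \<le> schur_weight \<rho> x / \<rho>"
proof -
  define g where "g = - reach_rep x + x"
  have summ: "summable (\<lambda>n. \<rho> ^ n * walk n h)" for h
    using assms by (intro summable_green) auto
  have "markov (schur_weight \<rho>) x = (\<Sum>s\<in>steps. step_prob s * green \<rho> (g + s))"
    unfolding markov_def schur_weight_def g_def
    by (intro sum.cong refl) (simp add: reach_rep_step add.assoc)
  also have "\<dots> = (\<Sum>n. \<Sum>s\<in>steps. step_prob s * (\<rho> ^ n * walk n (g + s)))"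
  proof -
    have "(\<Sum>s\<in>steps. step_prob s * (\<Sum>n. \<rho> ^ n * walk n (g + s)))
        = (\<Sum>s\<in>steps. \<Sum>n. step_prob s * (\<rho> ^ n * walk n (g + s)))"
      using summ by (simp add: suminf_mult)
    also have "\<dots> = (\<Sum>n. \<Sum>s\<in>steps. step_prob s * (\<rho> ^ n * walk n (g + s)))"
      using summ by (intro suminf_sum[symmetric] summable_mult)
    finally show ?thesis unfolding green_def .
  qed
  also have "\<dots> = (\<Sum>n. \<rho> ^ n * walk (Suc n) g)"
    by (simp add: markov_def sum_distrib_left algebra_simps)
  also have "\<dots> = (green \<rho> g - walk 0 g) / \<rho>"
  proof -
    have "summable (\<lambda>n. \<rho> ^ Suc n * walk (Suc n) g)"
      using summ[of g] by (subst summable_Suc_iff)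
    from summable_mult[OF this, of "1 / \<rho>"] have "summable (\<lambda>n. \<rho> ^ n * walk (Suc n) g)"
      using assms(1) by simp
    then have "\<rho> * (\<Sum>n. \<rho> ^ n * walk (Suc n) g) = (\<Sum>n. \<rho> ^ Suc n * walk (Suc n) g)"
      by (simp add: suminf_mult mult.assoc)
    also have "\<dots> = green \<rho> g - walk 0 g"
      unfolding green_def using suminf_split_head[OF summ[of g]] by simp
    finally show ?thesis using assms(1) by (simp add: field_simps)
  qed
  also have "\<dots> \<le> schur_weight \<rho> x / \<rho>"
    unfolding schur_weight_def g_def[symmetric] using assms(1) walk_nonneg[of 0 g]
    by (intro divide_right_mono) auto
  finally show ?thesis .
qed

lemma markov_pow_schur_weight:
  assumes "0 < \<rho>" "\<rho> * decay_rate < 1"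
  shows "(markov ^^ n) (schur_weight \<rho>) x \<le> (1 / \<rho>) ^ n * schur_weight \<rho> x"
proof (induction n arbitrary: x)
  case (Suc n)
  have "(markov ^^ Suc n) (schur_weight \<rho>) x \<le> markov (\<lambda>y. (1 / \<rho>) ^ n * schur_weight \<rho> y) x"
    using Suc by (simp add: markov_mono)
  also have "\<dots> \<le> (1 / \<rho>) ^ n * (schur_weight \<rho> x / \<rho>)"
    unfolding markov_scale using markov_schur_weight[OF assms] assms(1)
    by (intro mult_left_mono) auto
  finally show ?case by simp
qed simp

lemma sum_walk_row_le:
  assumes Y: "finite Y" and nonneg: "\<And>y. 0 \<le> \<phi> y"
  shows "(\<Sum>y\<in>Y. walk n (- x + y) * \<phi> y) \<le> (markov ^^ n) \<phi> x"
proof (induction n arbitrary: x)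
  case 0
  have "(\<Sum>y\<in>Y. walk 0 (- x + y) * \<phi> y) = (\<Sum>y\<in>Y. if y = x then \<phi> y else 0)"
    by (intro sum.cong refl) (auto simp: add_eq_0_iff2)
  also have "\<dots> \<le> \<phi> x" using Y nonneg[of x] by (simp add: sum.delta')
  finally show ?case by simp
next
  case (Suc n)
  have "(\<Sum>y\<in>Y. walk (Suc n) (- x + y) * \<phi> y)
      = (\<Sum>s\<in>steps. step_prob s * (\<Sum>y\<in>Y. walk n (- (x + s) + y) * \<phi> y))"
  proof -
    have "- s + (- x + y) = - (x + s) + y" for s y by (simp only: minus_add add.assoc)
    then show ?thesis
      unfolding walk_Suc_left sum_distrib_left sum_distrib_right
      by (subst sum.swap) (simp add: mult.assoc)
  qed
  also have "\<dots> \<le> (\<Sum>s\<in>steps. step_prob s * (markov ^^ n) \<phi> (x + s))"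
    using Suc by (intro sum_mono mult_left_mono) (auto simp: step_prob_nonneg)
  also have "\<dots> = (markov ^^ Suc n) \<phi> x" by (simp add: markov_def[of "(markov ^^ n) \<phi>"])
  finally show ?case .
qed

lemma sum_walk_col_le:
  assumes "finite X" "\<And>x. 0 \<le> \<phi> x"
  shows "(\<Sum>x\<in>X. walk n (- x + y) * \<phi> x) \<le> (markov ^^ n) \<phi> y"
proof -
  have "walk n (- x + y) = walk n (- y + x)" for x
    using walk_uminus[of n "- x + y"] by (simp add: minus_add)
  then show ?thesis using sum_walk_row_le[OF assms, of n y] by simp
qed

lemma sum_green_weighted_le:
  assumes "0 \<le> r" "r < \<rho>" "\<rho> * decay_rate < 1" and Y: "finite Y"
    and walk_bound: "\<And>n. (\<Sum>y\<in>Y. walk n (b y) * schur_weight \<rho> y) \<le> (markov ^^ n) (schur_weight \<rho>) x"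
  shows "(\<Sum>y\<in>Y. green r (b y) * schur_weight \<rho> y) \<le> schur_weight \<rho> x / (1 - r / \<rho>)"
proof -
  have "0 < \<rho>" using assms(1,2) by linarith
  have "r * decay_rate < 1" using smaller_rate[of r \<rho>] assms(1-3) by simp
  have ratio: "norm (r / \<rho>) < 1" using assms(1,2) by simp
  have summ: "summable (\<lambda>n. r ^ n * walk n g)" for g
    using assms(1) \<open>r * decay_rate < 1\<close> by (rule summable_green)
  have "(\<Sum>y\<in>Y. green r (b y) * schur_weight \<rho> y)
      = (\<Sum>n. \<Sum>y\<in>Y. r ^ n * walk n (b y) * schur_weight \<rho> y)"
    unfolding green_def using summ
    by (subst suminf_sum) (auto intro: summable_mult2 simp: suminf_mult2)
  also have "\<dots> \<le> (\<Sum>n. schur_weight \<rho> x * (r / \<rho>) ^ n)"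
  proof (rule suminf_le)
    show "(\<Sum>y\<in>Y. r ^ n * walk n (b y) * schur_weight \<rho> y) \<le> schur_weight \<rho> x * (r / \<rho>) ^ n" for n
    proof -
      have "(\<Sum>y\<in>Y. r ^ n * walk n (b y) * schur_weight \<rho> y)
          = r ^ n * (\<Sum>y\<in>Y. walk n (b y) * schur_weight \<rho> y)"
        by (simp add: sum_distrib_left mult.assoc)
      also have "\<dots> \<le> r ^ n * ((1 / \<rho>) ^ n * schur_weight \<rho> x)"
        using walk_bound[of n] markov_pow_schur_weight[OF \<open>0 < \<rho>\<close> assms(3), of n x] assms(1)
        by (intro mult_left_mono) auto
      finally show ?thesis by (simp add: power_divide mult_ac)
    qed
    show "summable (\<lambda>n. \<Sum>y\<in>Y. r ^ n * walk n (b y) * schur_weight \<rho> y)"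
      using summ by (intro summable_sum summable_mult2)
    show "summable (\<lambda>n. schur_weight \<rho> x * (r / \<rho>) ^ n)"
      using ratio by (intro summable_mult summable_geometric)
  qed
  also have "\<dots> = schur_weight \<rho> x / (1 - r / \<rho>)"
    using ratio by (simp add: suminf_mult suminf_geometric divide_inverse)
  finally show ?thesis .
qed

lemma green_in_littlewood:
  assumes "0 \<le> r" "r < \<rho>" "\<rho> * decay_rate < 1"
  shows "(\<lambda>g. complex_of_real (green r g)) \<in> littlewood"
proof (rule littlewood_if_schur_weight[where w = "schur_weight \<rho>" and C = "1 / (1 - r / \<rho>)"])
  show "0 \<le> green r g" for g
    using assms smaller_rate[of r \<rho>] by (intro green_nonneg) auto
  show "0 < schur_weight \<rho> x" for x
    using assms by (intro schur_weight_pos) auto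
  show "(\<Sum>y\<in>Y. green r (- x + y) * schur_weight \<rho> y) \<le> 1 / (1 - r / \<rho>) * schur_weight \<rho> x"
    if "finite Y" for x Y
    using sum_green_weighted_le[OF assms that
        sum_walk_row_le[OF that less_imp_le[OF schur_weight_pos]]] assms by simp
  show "(\<Sum>x\<in>X. green r (- x + y) * schur_weight \<rho> x) \<le> 1 / (1 - r / \<rho>) * schur_weight \<rho> y"
    if "finite X" for y X
    using sum_green_weighted_le[OF assms that
        sum_walk_col_le[OF that less_imp_le[OF schur_weight_pos]]] assms by simp
qed

lemma green_powr_growth:
  assumes "1 < r" "r * decay_rate < 1" "1 \<le> p"
  shows "(r powr p * real (card steps) powr (1 - p)) ^ n \<le> (\<Sum>g\<in>walk_support n. green r g powr p)"
proof -
  have pow_powr: "(x ^ n) powr a = (x powr a) ^ n" if "0 < x" for x a :: real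
    using that by (simp add: powr_realpow[symmetric] powr_powr powr_power mult.commute)
  have support_ne: "walk_support n \<noteq> {}" using sum_walk[of n] by auto
  have walk_pos: "0 < walk n g" if "g \<in> walk_support n" for g
    using that walk_nonneg[of n g] unfolding walk_support_def by (simp add: less_le)
  have "real (card steps ^ n) powr (1 - p) \<le> real (card (walk_support n)) powr (1 - p)"
    using assms(3) card_walk_support[of n] finite_walk_support support_ne
    by (intro powr_mono2') (auto simp: card_gt_0_iff)
  also have "\<dots> \<le> (\<Sum>g\<in>walk_support n. walk n g powr p)"
    using assms(3) by (intro card_powr_le_sum_powr finite_walk_support support_ne walk_pos sum_walk)
  finally have "(r ^ n) powr p * real (card steps ^ n) powr (1 - p)
      \<le> (r ^ n) powr p * (\<Sum>g\<in>walk_support n. walk n g powr p)"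
    by (intro mult_left_mono) auto
  also have "\<dots> = (\<Sum>g\<in>walk_support n. (r ^ n * walk n g) powr p)"
    by (simp add: powr_mult sum_distrib_left)
  also have "\<dots> \<le> (\<Sum>g\<in>walk_support n. green r g powr p)"
    using assms walk_nonneg walk_le_green
    by (intro sum_mono powr_mono2) (auto intro: mult_nonneg_nonneg)
  moreover have "0 < real (card steps)"
    using finite_steps zero_in_steps by (auto simp: card_gt_0_iff)
  ultimately show ?thesis
    using assms(1) by (simp add: pow_powr power_mult_distrib)
qed

lemma green_not_lp:
  assumes "1 < r" "r * decay_rate < 1"
  shows "\<exists>p>1. (\<lambda>g. complex_of_real (green r g)) \<notin> lp_space p"
proof -
  have "1 \<le> real (card steps)"
    using finite_steps zero_in_steps by (auto simp: Suc_le_eq card_gt_0_iff)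
  then obtain p where "p > 1" and growth: "1 < r powr p * real (card steps) powr (1 - p)"
    using exponent_beyond_one[OF assms(1)] by blast
  have "(\<lambda>g. complex_of_real (green r g)) \<notin> lp_space p"
  proof
    assume "(\<lambda>g. complex_of_real (green r g)) \<in> lp_space p"
    then have summ: "(\<lambda>g. green r g powr p) summable_on UNIV"
      unfolding lp_space_def using assms green_nonneg[of r] by simp
    obtain n where "(\<Sum>\<^sub>\<infinity>g. green r g powr p) < (r powr p * real (card steps) powr (1 - p)) ^ n"
      using real_arch_pow[OF growth] by blast
    also have "\<dots> \<le> (\<Sum>g\<in>walk_support n. green r g powr p)"
      using assms \<open>p > 1\<close> by (intro green_powr_growth) auto
    also have "\<dots> \<le> (\<Sum>\<^sub>\<infinity>g. green r g powr p)"
      by (intro finite_sum_le_infsum summ finite_walk_support) auto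
    finally show False by simp
  qed
  with \<open>p > 1\<close> show ?thesis by blast
qed

lemma exists_rates: "\<exists>r \<rho>. 1 < r \<and> r < \<rho> \<and> \<rho> * decay_rate < 1"
proof -
  define \<rho> where "\<rho> = 2 / (1 + decay_rate)"
  have "1 < \<rho>" "\<rho> * decay_rate < 1"
    unfolding \<rho>_def using decay_rate_nonneg decay_rate_less_1 by (auto simp: field_simps)
  then show ?thesis by (intro exI[of _ "(1 + \<rho>) / 2"] exI[of _ \<rho>]) auto
qed

lemma littlewood_not_subset_lp: "\<exists>p>1. \<not> (littlewood :: ('a \<Rightarrow> complex) set) \<subseteq> lp_space p"
proof -
  obtain r \<rho> where r: "1 < r" "r < \<rho>" "\<rho> * decay_rate < 1"
    using exists_rates by blast
  then have "r * decay_rate < 1" using smaller_rate[of r \<rho>] by simp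
  then obtain p where "p > 1" "(\<lambda>g. complex_of_real (green r g)) \<notin> lp_space p"
    using green_not_lp[OF r(1)] by blast
  moreover have "(\<lambda>g. complex_of_real (green r g)) \<in> littlewood"
    using r by (intro green_in_littlewood) auto
  ultimately show ?thesis by blast
qed

end

lemma not_folner_isoperimetric:
  assumes "\<not> folner_condition TYPE('a::group_add)"
  shows "\<exists>S1 e. isoperimetric (S1 :: 'a set) e"
proof -
  obtain G :: "'a set" and e :: real where G: "finite G" and "e > 0"
    and no_folner: "\<And>A. finite A \<Longrightarrow> A \<noteq> {} \<Longrightarrow>
        \<exists>h\<in>G. e * real (card A) < real (card ((\<lambda>a. h + a) ` A - A))"
    using assms unfolding folner_condition_def by (auto simp: not_le)
  have "isoperimetric (G \<union> uminus ` G) e"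
  proof
    show "finite (G \<union> uminus ` G)" using G by simp
    show "- s \<in> G \<union> uminus ` G" if "s \<in> G \<union> uminus ` G" for s using that by auto
    show "e > 0" by fact
    show "\<exists>s\<in>G \<union> uminus ` G. e * real (card B) < real (card {x\<in>B. x + s \<notin> B})"
      if B: "finite B" "B \<noteq> {}" for B
    proof -
      obtain h where "h \<in> G"
        "e * real (card (uminus ` B)) < real (card ((\<lambda>a. h + a) ` uminus ` B - uminus ` B))"
        using no_folner[of "uminus ` B"] B by auto
      moreover have "card (uminus ` B) = card B" by (simp add: card_image)
      ultimately show ?thesis
        unfolding card_translate_uminus_diff by (intro bexI[of _ "- h"]) auto
    qed
  qed
  then show ?thesis by blast
qed

theorem theorem1p1:
  assumes "\<not> amenable TYPE('a::group_add)"
  shows "\<exists>p::real. p > 1 \<and> \<not> ((littlewood :: ('a \<Rightarrow> complex) set) \<subseteq> lp_space p)"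
proof -
  have "\<not> folner_condition TYPE('a)" using assms folner_imp_amenable by blast
  then obtain S1 :: "'a set" and e where "isoperimetric S1 e"
    using not_folner_isoperimetric by blast
  then interpret isoperimetric S1 e .
  show ?thesis using littlewood_not_subset_lp by blast
qed

end
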